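(* Let $R$ be a ring, $N$ an exact complex of left $R$-modules and $M$ a bounded below complex of left $R$-modules. If $Z_n(N)\in\underline{\mathfrak{Pr}}^{-1}_{R\text{-Mod}}(M_n)$ for every $n\in\mathbb{Z}$, then $N\in\underline{\mathfrak{Pr}}^{-1}_{\mathscr{C}(R)}(M)$.
   Context: Complexes are homologically indexed, $Z_n(N)=\mathrm{Ker}\,d_n^N$. A complex $M$ is bounded below if there is $b$ with $M_n=0$ for all $n\le b$. For objects $M,N$ of an abelian category $\mathscr{A}$ with enough projectives ($R\text{-Mod}$ or the category $\mathscr{C}(R)$ of complexes), $M$ is $N$-subprojective if every morphism $M\to N$ factors through a projective object of $\mathscr{A}$; $\underline{\mathfrak{Pr}}^{-1}_{\mathscr{A}}(M)$ is the class of all $N$ such that $M$ is $N$-subprojective. *)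

theory Defs
  imports "HOL-Algebra.Module"
begin

definition left_module :: "'r ring \<Rightarrow> ('r, 'a) module \<Rightarrow> bool" where
  "left_module R M \<longleftrightarrow> ring R \<and> abelian_group M \<and> module_axioms R M"

definition lmod_hom :: "'r ring \<Rightarrow> ('r, 'a) module \<Rightarrow> ('r, 'b) module \<Rightarrow> ('a \<Rightarrow> 'b) set" where
  "lmod_hom R M N = {f.
     (\<forall>x\<in>carrier M. f x \<in> carrier N) \<and>
     (\<forall>x\<in>carrier M. \<forall>y\<in>carrier M. f (add M x y) = add N (f x) (f y)) \<and>
     (\<forall>a\<in>carrier R. \<forall>x\<in>carrier M. f (smult M a x) = smult N a (f x))}"

definition free_mod :: "'r ring \<Rightarrow> 'p set \<Rightarrow> ('r, 'p \<Rightarrow> 'r) module" where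
  "free_mod R X = \<lparr> carrier = {f. (\<forall>x. f x \<in> carrier R) \<and> finite {x. f x \<noteq> zero R}
                                   \<and> {x. f x \<noteq> zero R} \<subseteq> X},
                    mult = (\<lambda>f g. undefined), one = undefined,
                    zero = (\<lambda>x. zero R),
                    add = (\<lambda>f g x. add R (f x) (g x)),
                    smult = (\<lambda>a f x. mult R a (f x)) \<rparr>"

definition prod_mod :: "('r, 'a) module \<Rightarrow> ('r, 'b) module \<Rightarrow> ('r, 'a \<times> 'b) module" where
  "prod_mod A B = \<lparr> carrier = carrier A \<times> carrier B,
                    mult = (\<lambda>u v. undefined), one = undefined,
                    zero = (zero A, zero B),
                    add = (\<lambda>u v. (add A (fst u) (fst v), add B (snd u) (snd v))),
                    smult = (\<lambda>a u. (smult A a (fst u), smult B a (snd u))) \<rparr>"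

text \<open>Projective left module: a direct summand of a free module
  (equivalent to the lifting property).\<close>
definition projective_mod :: "'r ring \<Rightarrow> ('r, 'p) module \<Rightarrow> bool" where
  "projective_mod R P \<longleftrightarrow> left_module R P \<and>
     (\<exists>X :: 'p set. \<exists>\<pi>\<in>lmod_hom R (free_mod R X) P. \<exists>\<sigma>\<in>lmod_hom R P (free_mod R X).
        \<forall>x\<in>carrier P. \<pi> (\<sigma> x) = x)"

definition is_complex :: "'r ring \<Rightarrow> (int \<Rightarrow> ('r, 'a) module) \<Rightarrow> (int \<Rightarrow> 'a \<Rightarrow> 'a) \<Rightarrow> bool" where
  "is_complex R C d \<longleftrightarrow> (\<forall>n. left_module R (C n) \<and> d n \<in> lmod_hom R (C n) (C (n - 1)) \<and>
      (\<forall>x\<in>carrier (C n). d (n - 1) (d n x) = zero (C (n - 2))))"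

definition chain_map :: "'r ring \<Rightarrow> (int \<Rightarrow> ('r, 'a) module) \<Rightarrow> (int \<Rightarrow> 'a \<Rightarrow> 'a)
     \<Rightarrow> (int \<Rightarrow> ('r, 'b) module) \<Rightarrow> (int \<Rightarrow> 'b \<Rightarrow> 'b) \<Rightarrow> (int \<Rightarrow> 'a \<Rightarrow> 'b) \<Rightarrow> bool" where
  "chain_map R C dC D dD f \<longleftrightarrow> (\<forall>n. f n \<in> lmod_hom R (C n) (D n) \<and>
      (\<forall>x\<in>carrier (C n). f (n - 1) (dC n x) = dD n (f n x)))"

definition cycles :: "(int \<Rightarrow> ('r, 'a) module) \<Rightarrow> (int \<Rightarrow> 'a \<Rightarrow> 'a) \<Rightarrow> int \<Rightarrow> ('r, 'a) module" where
  "cycles C d n = (C n)\<lparr> carrier := {x \<in> carrier (C n). d n x = zero (C (n - 1))} \<rparr>"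

definition exact_complex :: "'r ring \<Rightarrow> (int \<Rightarrow> ('r, 'a) module) \<Rightarrow> (int \<Rightarrow> 'a \<Rightarrow> 'a) \<Rightarrow> bool" where
  "exact_complex R C d \<longleftrightarrow> is_complex R C d \<and>
     (\<forall>n. carrier (cycles C d n) = d (n + 1) ` carrier (C (n + 1)))"

definition bounded_below :: "(int \<Rightarrow> ('r, 'a) module) \<Rightarrow> bool" where
  "bounded_below C \<longleftrightarrow> (\<exists>b. \<forall>n\<le>b. carrier (C n) = {zero (C n)})"

text \<open>Free complex on a graded set X: the direct sum of disks D^n(R^(X_n)),
  i.e. F_n = R^(X_n) + R^(X_(n+1)) with d_n(a,b) = (0,a).\<close>
definition free_cplx :: "'r ring \<Rightarrow> (int \<Rightarrow> 'q set) \<Rightarrow> int \<Rightarrow> ('r, ('q \<Rightarrow> 'r) \<times> ('q \<Rightarrow> 'r)) module" where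
  "free_cplx R X n = prod_mod (free_mod R (X n)) (free_mod R (X (n + 1)))"

definition free_cplx_d :: "'r ring \<Rightarrow> int \<Rightarrow> ('q \<Rightarrow> 'r) \<times> ('q \<Rightarrow> 'r) \<Rightarrow> ('q \<Rightarrow> 'r) \<times> ('q \<Rightarrow> 'r)" where
  "free_cplx_d R n u = ((\<lambda>x. zero R), fst u)"

text \<open>Projective object of C(R): a direct summand of a free complex.\<close>
definition projective_cplx :: "'r ring \<Rightarrow> (int \<Rightarrow> ('r, 'q) module) \<Rightarrow> (int \<Rightarrow> 'q \<Rightarrow> 'q) \<Rightarrow> bool" where
  "projective_cplx R Q dQ \<longleftrightarrow> is_complex R Q dQ \<and>
     (\<exists>X :: int \<Rightarrow> 'q set. \<exists>\<pi> \<sigma>.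
        chain_map R (free_cplx R X) (free_cplx_d R) Q dQ \<pi> \<and>
        chain_map R Q dQ (free_cplx R X) (free_cplx_d R) \<sigma> \<and>
        (\<forall>n. \<forall>x\<in>carrier (Q n). \<pi> n (\<sigma> n x) = x))"

end

(* Let e_n : R^(N_n) -> N_n be the canonical surjection from the free module on the underlying
   set of N_n. Since M is bounded below, maps a_n : M_n -> R^(N_(n+1)) with
     f_n = e_n a_(n-1) d + d e_(n+1) a_n
   are built by induction on n: the difference f_n - e_n a_(n-1) d takes values in
   Z_n(N) = d(N_(n+1)), so by hypothesis it factors through a projective module, and a
   projective module lifts along the surjection d e_(n+1) : R^(N_(n+1)) -> Z_n(N).
   Thus e_(n+1) a_n is a null-homotopy of f whose components factor through free modules, and
   f factors through the free complex of disks on the R^(N_n), via x |-> (a_(n-1)(d x), a_n x)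
   and (u, v) |-> e_n u + d e_(n+1) v. *)

theory Submission
  imports Defs
begin

section \<open>Left modules\<close>

locale lmodule = R?: ring R + M?: abelian_group M
  for R :: "'r ring" and M :: "('r, 'a) module" +
  assumes scalar_axioms: "module_axioms R M"

lemma left_module_iff_lmodule: "left_module R M \<longleftrightarrow> lmodule R M"
  by (auto simp: left_module_def lmodule_def lmodule_axioms_def)

context lmodule
begin

lemma smult_closed [simp, intro]: "a \<in> carrier R \<Longrightarrow> x \<in> carrier M \<Longrightarrow> a \<odot>\<^bsub>M\<^esub> x \<in> carrier M"
  using scalar_axioms by (simp add: module_axioms_def)

lemma smult_l_distr:
  "a \<in> carrier R \<Longrightarrow> b \<in> carrier R \<Longrightarrow> x \<in> carrier M \<Longrightarrow>
   (a \<oplus>\<^bsub>R\<^esub> b) \<odot>\<^bsub>M\<^esub> x = a \<odot>\<^bsub>M\<^esub> x \<oplus>\<^bsub>M\<^esub> b \<odot>\<^bsub>M\<^esub> x"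
  using scalar_axioms by (simp add: module_axioms_def)

lemma smult_r_distr:
  "a \<in> carrier R \<Longrightarrow> x \<in> carrier M \<Longrightarrow> y \<in> carrier M \<Longrightarrow>
   a \<odot>\<^bsub>M\<^esub> (x \<oplus>\<^bsub>M\<^esub> y) = a \<odot>\<^bsub>M\<^esub> x \<oplus>\<^bsub>M\<^esub> a \<odot>\<^bsub>M\<^esub> y"
  using scalar_axioms by (simp add: module_axioms_def)

lemma smult_assoc1:
  "a \<in> carrier R \<Longrightarrow> b \<in> carrier R \<Longrightarrow> x \<in> carrier M \<Longrightarrow>
   (a \<otimes>\<^bsub>R\<^esub> b) \<odot>\<^bsub>M\<^esub> x = a \<odot>\<^bsub>M\<^esub> (b \<odot>\<^bsub>M\<^esub> x)"
  using scalar_axioms by (simp add: module_axioms_def)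

lemma smult_one [simp]: "x \<in> carrier M \<Longrightarrow> \<one>\<^bsub>R\<^esub> \<odot>\<^bsub>M\<^esub> x = x"
  using scalar_axioms by (simp add: module_axioms_def)

lemma smult_r_null [simp]: "a \<in> carrier R \<Longrightarrow> a \<odot>\<^bsub>M\<^esub> \<zero>\<^bsub>M\<^esub> = \<zero>\<^bsub>M\<^esub>"
  using smult_r_distr[of a "\<zero>\<^bsub>M\<^esub>" "\<zero>\<^bsub>M\<^esub>"] by (simp add: M.add.r_cancel_one')

lemma smult_l_null [simp]: "x \<in> carrier M \<Longrightarrow> \<zero>\<^bsub>R\<^esub> \<odot>\<^bsub>M\<^esub> x = \<zero>\<^bsub>M\<^esub>"
  using smult_l_distr[of "\<zero>\<^bsub>R\<^esub>" "\<zero>\<^bsub>R\<^esub>" x] by (simp add: M.add.r_cancel_one')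

lemma smult_r_minus:
  assumes "a \<in> carrier R" "x \<in> carrier M"
  shows "a \<odot>\<^bsub>M\<^esub> (\<ominus>\<^bsub>M\<^esub> x) = \<ominus>\<^bsub>M\<^esub> (a \<odot>\<^bsub>M\<^esub> x)"
proof -
  have "a \<odot>\<^bsub>M\<^esub> (\<ominus>\<^bsub>M\<^esub> x) \<oplus>\<^bsub>M\<^esub> a \<odot>\<^bsub>M\<^esub> x = \<zero>\<^bsub>M\<^esub>"
    using assms by (simp add: smult_r_distr[symmetric] M.l_neg)
  then show ?thesis using assms by (simp add: M.minus_equality)
qed

lemma finsum_smult_ldistr:
  "finite A \<Longrightarrow> a \<in> carrier R \<Longrightarrow> g \<in> A \<rightarrow> carrier M \<Longrightarrow>
   a \<odot>\<^bsub>M\<^esub> finsum M g A = finsum M (\<lambda>i. a \<odot>\<^bsub>M\<^esub> g i) A"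
  by (induction A rule: finite_induct) (auto simp: smult_r_distr Pi_def)

end

lemma lmod_hom_closed: "f \<in> lmod_hom R M N \<Longrightarrow> x \<in> carrier M \<Longrightarrow> f x \<in> carrier N"
  by (simp add: lmod_hom_def)

lemma lmod_hom_add:
  "f \<in> lmod_hom R M N \<Longrightarrow> x \<in> carrier M \<Longrightarrow> y \<in> carrier M \<Longrightarrow> f (x \<oplus>\<^bsub>M\<^esub> y) = f x \<oplus>\<^bsub>N\<^esub> f y"
  by (simp add: lmod_hom_def)

lemma lmod_hom_smult:
  "f \<in> lmod_hom R M N \<Longrightarrow> a \<in> carrier R \<Longrightarrow> x \<in> carrier M \<Longrightarrow> f (a \<odot>\<^bsub>M\<^esub> x) = a \<odot>\<^bsub>N\<^esub> f x"
  by (simp add: lmod_hom_def)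

lemma lmod_hom_comp: "f \<in> lmod_hom R M N \<Longrightarrow> g \<in> lmod_hom R N K \<Longrightarrow> (\<lambda>x. g (f x)) \<in> lmod_hom R M K"
  by (simp add: lmod_hom_def)

context
  fixes R :: "'r ring" and M :: "('r, 'a) module" and N :: "('r, 'b) module" and f
  assumes M: "lmodule R M" and N: "lmodule R N" and f: "f \<in> lmod_hom R M N"
begin

interpretation M: lmodule R M by (rule M)
interpretation N: lmodule R N by (rule N)

lemma lmod_hom_zero: "f \<zero>\<^bsub>M\<^esub> = \<zero>\<^bsub>N\<^esub>"
  using lmod_hom_add[OF f, of "\<zero>\<^bsub>M\<^esub>" "\<zero>\<^bsub>M\<^esub>"] lmod_hom_closed[OF f, of "\<zero>\<^bsub>M\<^esub>"]
  by (simp add: N.add.r_cancel_one')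

lemma lmod_hom_uminus: "x \<in> carrier M \<Longrightarrow> f (\<ominus>\<^bsub>M\<^esub> x) = \<ominus>\<^bsub>N\<^esub> f x"
  using lmod_hom_add[OF f, of "\<ominus>\<^bsub>M\<^esub> x" x] lmod_hom_closed[OF f] lmod_hom_zero
  by (simp add: M.l_neg N.minus_equality)

lemma lmod_hom_minus: "x \<in> carrier M \<Longrightarrow> y \<in> carrier M \<Longrightarrow> f (x \<ominus>\<^bsub>M\<^esub> y) = f x \<ominus>\<^bsub>N\<^esub> f y"
  by (simp add: a_minus_def lmod_hom_add[OF f] lmod_hom_uminus)

lemma lmod_hom_finsum:
  "finite A \<Longrightarrow> g \<in> A \<rightarrow> carrier M \<Longrightarrow> f (finsum M g A) = finsum N (\<lambda>i. f (g i)) A"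
  by (induction A rule: finite_induct)
    (auto simp: lmod_hom_zero lmod_hom_add[OF f] lmod_hom_closed[OF f] Pi_def)

end

lemma lmod_hom_diff:
  assumes "lmodule R N" and f: "f \<in> lmod_hom R M N" and g: "g \<in> lmod_hom R M N"
  shows "(\<lambda>x. f x \<ominus>\<^bsub>N\<^esub> g x) \<in> lmod_hom R M N"
proof -
  interpret N: lmodule R N by fact
  note closed = lmod_hom_closed[OF f] lmod_hom_closed[OF g]
  show ?thesis
    unfolding lmod_hom_def
    using closed
    by (auto simp: lmod_hom_add[OF f] lmod_hom_add[OF g] lmod_hom_smult[OF f] lmod_hom_smult[OF g]
        N.minus_eq N.minus_add N.a_ac N.smult_r_distr N.smult_r_minus)
qed

lemma lmod_hom_const_zero:
  assumes "lmodule R N"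
  shows "(\<lambda>x. \<zero>\<^bsub>N\<^esub>) \<in> lmod_hom R M N"
proof -
  interpret N: lmodule R N by fact
  show ?thesis by (simp add: lmod_hom_def)
qed

lemma prod_mod_simps:
  "carrier (prod_mod A B) = carrier A \<times> carrier B"
  "zero (prod_mod A B) = (\<zero>\<^bsub>A\<^esub>, \<zero>\<^bsub>B\<^esub>)"
  "add (prod_mod A B) = (\<lambda>u v. (fst u \<oplus>\<^bsub>A\<^esub> fst v, snd u \<oplus>\<^bsub>B\<^esub> snd v))"
  "smult (prod_mod A B) = (\<lambda>a u. (a \<odot>\<^bsub>A\<^esub> fst u, a \<odot>\<^bsub>B\<^esub> snd u))"
  by (simp_all add: prod_mod_def)

lemma prod_mod_lmodule:
  assumes "lmodule R A" "lmodule R B"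
  shows "lmodule R (prod_mod A B)"
proof -
  interpret A: lmodule R A by fact
  interpret B: lmodule R B by fact
  have "abelian_group (prod_mod A B)"
  proof (rule abelian_groupI)
    fix u assume "u \<in> carrier (prod_mod A B)"
    then show "\<exists>v\<in>carrier (prod_mod A B). v \<oplus>\<^bsub>prod_mod A B\<^esub> u = \<zero>\<^bsub>prod_mod A B\<^esub>"
      by (intro bexI[of _ "(\<ominus>\<^bsub>A\<^esub> fst u, \<ominus>\<^bsub>B\<^esub> snd u)"]) (auto simp: prod_mod_simps A.l_neg B.l_neg)
  qed (auto simp: prod_mod_simps A.a_ac B.a_ac)
  moreover have "module_axioms R (prod_mod A B)"
    unfolding module_axioms_def
    by (auto simp: prod_mod_simps A.smult_l_distr B.smult_l_distr A.smult_r_distr B.smult_r_distr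
        A.smult_assoc1 B.smult_assoc1)
  ultimately show ?thesis
    by (simp add: lmodule_def lmodule_axioms_def A.ring_axioms)
qed

lemma lmod_hom_pair:
  "f \<in> lmod_hom R M A \<Longrightarrow> g \<in> lmod_hom R M B \<Longrightarrow> (\<lambda>x. (f x, g x)) \<in> lmod_hom R M (prod_mod A B)"
  by (simp add: lmod_hom_def prod_mod_simps)

lemma lmod_hom_prod_map:
  "f \<in> lmod_hom R A A' \<Longrightarrow> g \<in> lmod_hom R B B' \<Longrightarrow>
   (\<lambda>u. (f (fst u), g (snd u))) \<in> lmod_hom R (prod_mod A B) (prod_mod A' B')"
  by (auto simp: lmod_hom_def prod_mod_simps)

lemma lmod_hom_copair:
  assumes "lmodule R N" and f: "f \<in> lmod_hom R A N" and g: "g \<in> lmod_hom R B N"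
  shows "(\<lambda>u. f (fst u) \<oplus>\<^bsub>N\<^esub> g (snd u)) \<in> lmod_hom R (prod_mod A B) N"
proof -
  interpret N: lmodule R N by fact
  show ?thesis
    unfolding lmod_hom_def
    using lmod_hom_closed[OF f] lmod_hom_closed[OF g]
    by (auto simp: prod_mod_simps lmod_hom_add[OF f] lmod_hom_add[OF g] lmod_hom_smult[OF f]
        lmod_hom_smult[OF g] N.smult_r_distr N.a_ac)
qed


section \<open>Free modules\<close>

lemma free_mod_simps:
  "carrier (free_mod R X) =
     {c. (\<forall>x. c x \<in> carrier R) \<and> finite {x. c x \<noteq> \<zero>\<^bsub>R\<^esub>} \<and> {x. c x \<noteq> \<zero>\<^bsub>R\<^esub>} \<subseteq> X}"
  "zero (free_mod R X) = (\<lambda>x. \<zero>\<^bsub>R\<^esub>)"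
  "add (free_mod R X) = (\<lambda>c d x. c x \<oplus>\<^bsub>R\<^esub> d x)"
  "smult (free_mod R X) = (\<lambda>a c x. a \<otimes>\<^bsub>R\<^esub> c x)"
  by (simp_all add: free_mod_def)

lemma free_mod_lmodule:
  assumes "ring R"
  shows "lmodule R (free_mod R X)"
proof -
  interpret R: ring R by fact
  have closed: "(\<lambda>x. c x \<oplus>\<^bsub>R\<^esub> d x) \<in> carrier (free_mod R X)"
    "(\<lambda>x. \<ominus>\<^bsub>R\<^esub> c x) \<in> carrier (free_mod R X)"
    "(\<lambda>x. a \<otimes>\<^bsub>R\<^esub> c x) \<in> carrier (free_mod R X)"
    if "c \<in> carrier (free_mod R X)" "d \<in> carrier (free_mod R X)" "a \<in> carrier R" for a c d
  proof -
    have "{x. c x \<oplus>\<^bsub>R\<^esub> d x \<noteq> \<zero>\<^bsub>R\<^esub>} \<subseteq> {x. c x \<noteq> \<zero>\<^bsub>R\<^esub>} \<union> {x. d x \<noteq> \<zero>\<^bsub>R\<^esub>}"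
      "{x. \<ominus>\<^bsub>R\<^esub> c x \<noteq> \<zero>\<^bsub>R\<^esub>} \<subseteq> {x. c x \<noteq> \<zero>\<^bsub>R\<^esub>}"
      "{x. a \<otimes>\<^bsub>R\<^esub> c x \<noteq> \<zero>\<^bsub>R\<^esub>} \<subseteq> {x. c x \<noteq> \<zero>\<^bsub>R\<^esub>}"
      using that by (auto simp: free_mod_simps)
    then show "(\<lambda>x. c x \<oplus>\<^bsub>R\<^esub> d x) \<in> carrier (free_mod R X)"
      "(\<lambda>x. \<ominus>\<^bsub>R\<^esub> c x) \<in> carrier (free_mod R X)"
      "(\<lambda>x. a \<otimes>\<^bsub>R\<^esub> c x) \<in> carrier (free_mod R X)"
      using that by (auto simp: free_mod_simps intro: finite_subset)
  qed
  have "abelian_group (free_mod R X)"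
  proof (rule abelian_groupI)
    fix c assume c: "c \<in> carrier (free_mod R X)"
    show "\<exists>d\<in>carrier (free_mod R X). d \<oplus>\<^bsub>free_mod R X\<^esub> c = \<zero>\<^bsub>free_mod R X\<^esub>"
      using closed(2)[OF c c R.zero_closed] c
      by (intro bexI[of _ "\<lambda>x. \<ominus>\<^bsub>R\<^esub> c x"]) (auto simp: free_mod_simps R.l_neg)
  qed (use closed(1) in \<open>auto simp: free_mod_simps R.a_ac\<close>)
  moreover have "module_axioms R (free_mod R X)"
    unfolding module_axioms_def using closed(1,3)
    by (auto simp: free_mod_simps R.l_distr R.r_distr R.m_assoc)
  ultimately show ?thesis
    by (simp add: lmodule_def lmodule_axioms_def assms)
qed

definition free_basis :: "'r ring \<Rightarrow> 'p \<Rightarrow> 'p \<Rightarrow> 'r" where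
  "free_basis R y = (\<lambda>x. if x = y then \<one>\<^bsub>R\<^esub> else \<zero>\<^bsub>R\<^esub>)"

definition lin_ext :: "'r ring \<Rightarrow> ('r, 'a) module \<Rightarrow> ('p \<Rightarrow> 'a) \<Rightarrow> ('p \<Rightarrow> 'r) \<Rightarrow> 'a" where
  "lin_ext R N h c = finsum N (\<lambda>x. c x \<odot>\<^bsub>N\<^esub> h x) {x. c x \<noteq> \<zero>\<^bsub>R\<^esub>}"

lemma free_basis_closed: "ring R \<Longrightarrow> y \<in> X \<Longrightarrow> free_basis R y \<in> carrier (free_mod R X)"
  by (auto simp: free_mod_simps free_basis_def ring.ring_simprules
      intro: finite_subset[of _ "{y}"])

context
  fixes R :: "'r ring" and N :: "('r, 'a) module" and X :: "'p set" and h :: "'p \<Rightarrow> 'a"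
  assumes N: "lmodule R N" and h: "\<And>x. x \<in> X \<Longrightarrow> h x \<in> carrier N"
begin

interpretation N: lmodule R N by (rule N)
interpretation F: lmodule R "free_mod R X" by (rule free_mod_lmodule[OF N.ring_axioms])

lemma lin_ext_eq_finsum:
  assumes c: "c \<in> carrier (free_mod R X)"
    and S: "finite S" "{x. c x \<noteq> \<zero>\<^bsub>R\<^esub>} \<subseteq> S" "S \<subseteq> X"
  shows "lin_ext R N h c = finsum N (\<lambda>x. c x \<odot>\<^bsub>N\<^esub> h x) S"
  unfolding lin_ext_def
  by (rule N.add.finprod_mono_neutral_cong_left) (use S c h in \<open>auto simp: free_mod_simps\<close>)

lemma lin_ext_cong:
  assumes "c \<in> carrier (free_mod R X)" "\<And>x. x \<in> X \<Longrightarrow> h x = h' x"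
  shows "lin_ext R N h c = lin_ext R N h' c"
  unfolding lin_ext_def
  by (rule N.finsum_cong') (use assms h in \<open>auto simp: free_mod_simps\<close>)

lemma lin_ext_lmod_hom: "lin_ext R N h \<in> lmod_hom R (free_mod R X) N"
  unfolding lmod_hom_def
proof (intro CollectI conjI ballI)
  fix c assume c: "c \<in> carrier (free_mod R X)"
  then show "lin_ext R N h c \<in> carrier N"
    unfolding lin_ext_def using h by (intro N.finsum_closed) (auto simp: free_mod_simps)
next
  fix c d assume c: "c \<in> carrier (free_mod R X)" and d: "d \<in> carrier (free_mod R X)"
  define S where "S = {x. c x \<noteq> \<zero>\<^bsub>R\<^esub>} \<union> {x. d x \<noteq> \<zero>\<^bsub>R\<^esub>}"
  have S: "finite S" "S \<subseteq> X" "{x. c x \<oplus>\<^bsub>R\<^esub> d x \<noteq> \<zero>\<^bsub>R\<^esub>} \<subseteq> S"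
    "{x. c x \<noteq> \<zero>\<^bsub>R\<^esub>} \<subseteq> S" "{x. d x \<noteq> \<zero>\<^bsub>R\<^esub>} \<subseteq> S"
    using c d by (auto simp: S_def free_mod_simps)
  have cd: "c \<oplus>\<^bsub>free_mod R X\<^esub> d \<in> carrier (free_mod R X)"
    using c d by (rule F.a_closed)
  have "lin_ext R N h (c \<oplus>\<^bsub>free_mod R X\<^esub> d) = finsum N (\<lambda>x. (c x \<oplus>\<^bsub>R\<^esub> d x) \<odot>\<^bsub>N\<^esub> h x) S"
    using lin_ext_eq_finsum[OF cd] S by (simp add: free_mod_simps)
  also have "\<dots> = finsum N (\<lambda>x. c x \<odot>\<^bsub>N\<^esub> h x \<oplus>\<^bsub>N\<^esub> d x \<odot>\<^bsub>N\<^esub> h x) S"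
    using c d S h by (intro N.finsum_cong') (auto simp: free_mod_simps N.smult_l_distr)
  also have "\<dots> = finsum N (\<lambda>x. c x \<odot>\<^bsub>N\<^esub> h x) S \<oplus>\<^bsub>N\<^esub> finsum N (\<lambda>x. d x \<odot>\<^bsub>N\<^esub> h x) S"
    using c d S h by (intro N.finsum_addf) (auto simp: free_mod_simps)
  also have "\<dots> = lin_ext R N h c \<oplus>\<^bsub>N\<^esub> lin_ext R N h d"
    using lin_ext_eq_finsum[OF c S(1,4,2)] lin_ext_eq_finsum[OF d S(1,5,2)] by simp
  finally show "lin_ext R N h (c \<oplus>\<^bsub>free_mod R X\<^esub> d) = lin_ext R N h c \<oplus>\<^bsub>N\<^esub> lin_ext R N h d" .
next
  fix a c assume a: "a \<in> carrier R" and c: "c \<in> carrier (free_mod R X)"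
  define S where "S = {x. c x \<noteq> \<zero>\<^bsub>R\<^esub>}"
  have S: "finite S" "S \<subseteq> X" "{x. a \<otimes>\<^bsub>R\<^esub> c x \<noteq> \<zero>\<^bsub>R\<^esub>} \<subseteq> S"
    using a c by (auto simp: S_def free_mod_simps)
  have ac: "a \<odot>\<^bsub>free_mod R X\<^esub> c \<in> carrier (free_mod R X)"
    using a c by (rule F.smult_closed)
  have "lin_ext R N h (a \<odot>\<^bsub>free_mod R X\<^esub> c) = finsum N (\<lambda>x. (a \<otimes>\<^bsub>R\<^esub> c x) \<odot>\<^bsub>N\<^esub> h x) S"
    using lin_ext_eq_finsum[OF ac] S by (simp add: free_mod_simps)
  also have "\<dots> = finsum N (\<lambda>x. a \<odot>\<^bsub>N\<^esub> (c x \<odot>\<^bsub>N\<^esub> h x)) S"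
    using a c S h by (intro N.finsum_cong') (auto simp: free_mod_simps N.smult_assoc1)
  also have "\<dots> = a \<odot>\<^bsub>N\<^esub> lin_ext R N h c"
    unfolding lin_ext_def S_def using a c h
    by (intro N.finsum_smult_ldistr[symmetric]) (auto simp: free_mod_simps)
  finally show "lin_ext R N h (a \<odot>\<^bsub>free_mod R X\<^esub> c) = a \<odot>\<^bsub>N\<^esub> lin_ext R N h c" .
qed

lemma lin_ext_free_basis:
  assumes y: "y \<in> X"
  shows "lin_ext R N h (free_basis R y) = h y"
proof -
  have "lin_ext R N h (free_basis R y) = finsum N (\<lambda>x. free_basis R y x \<odot>\<^bsub>N\<^esub> h x) {y}"
    using y by (intro lin_ext_eq_finsum free_basis_closed N.ring_axioms) (auto simp: free_basis_def)
  then show ?thesis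
    using h[OF y] by (simp add: free_basis_def)
qed

lemma lmod_hom_lin_ext:
  assumes N': "lmodule R N'" and \<phi>: "\<phi> \<in> lmod_hom R N N'" and c: "c \<in> carrier (free_mod R X)"
  shows "\<phi> (lin_ext R N h c) = lin_ext R N' (\<lambda>x. \<phi> (h x)) c"
proof -
  interpret N': lmodule R N' by (rule N')
  have supp: "{x. c x \<noteq> \<zero>\<^bsub>R\<^esub>} \<subseteq> X" "finite {x. c x \<noteq> \<zero>\<^bsub>R\<^esub>}" "\<And>x. c x \<in> carrier R"
    using c by (auto simp: free_mod_simps)
  have "\<phi> (lin_ext R N h c) = finsum N' (\<lambda>x. \<phi> (c x \<odot>\<^bsub>N\<^esub> h x)) {x. c x \<noteq> \<zero>\<^bsub>R\<^esub>}"
    unfolding lin_ext_def using supp h by (intro lmod_hom_finsum[OF N N' \<phi>]) auto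
  also have "\<dots> = lin_ext R N' (\<lambda>x. \<phi> (h x)) c"
    unfolding lin_ext_def using supp h
    by (intro N'.finsum_cong') (auto simp: lmod_hom_smult[OF \<phi>] lmod_hom_closed[OF \<phi>] Pi_def)
  finally show ?thesis .
qed

end

lemma free_mod_finsum_apply:
  assumes "ring R" "finite S" "G \<in> S \<rightarrow> carrier (free_mod R X)"
  shows "finsum (free_mod R X) G S y = finsum R (\<lambda>i. G i y) S"
proof -
  interpret R: ring R by fact
  interpret F: lmodule R "free_mod R X" by (rule free_mod_lmodule[OF assms(1)])
  show ?thesis
    using assms(2,3)
  proof (induction S rule: finite_induct)
    case empty
    then show ?case by (simp add: free_mod_simps)
  next
    case (insert i S)
    have "G i y \<in> carrier R" "\<And>j. j \<in> S \<Longrightarrow> G j y \<in> carrier R"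
      using insert.prems by (auto simp: free_mod_simps)
    then show ?case using insert by (simp add: free_mod_simps Pi_def)
  qed
qed

lemma lin_ext_free_basis_self:
  assumes R: "ring R" and c: "c \<in> carrier (free_mod R X)"
  shows "lin_ext R (free_mod R X) (free_basis R) c = c"
proof
  fix y
  interpret R: ring R by (rule R)
  interpret F: lmodule R "free_mod R X" by (rule free_mod_lmodule[OF R])
  define S where "S = {x. c x \<noteq> \<zero>\<^bsub>R\<^esub>}"
  have S: "finite S" "S \<subseteq> X" "\<And>x. c x \<in> carrier R"
    using c by (auto simp: S_def free_mod_simps)
  have G: "(\<lambda>x. c x \<odot>\<^bsub>free_mod R X\<^esub> free_basis R x) \<in> S \<rightarrow> carrier (free_mod R X)"
    using S by (auto intro!: F.smult_closed free_basis_closed[OF R])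
  have "lin_ext R (free_mod R X) (free_basis R) c y = finsum R (\<lambda>i. c i \<otimes>\<^bsub>R\<^esub> free_basis R i y) S"
    unfolding lin_ext_def S_def[symmetric] free_mod_finsum_apply[OF R S(1) G]
    by (simp add: free_mod_simps)
  also have "\<dots> = finsum R (\<lambda>i. if i = y then c i else \<zero>\<^bsub>R\<^esub>) S"
    using S by (intro R.finsum_cong') (auto simp: free_basis_def)
  also have "\<dots> = c y"
  proof (cases "y \<in> S")
    case True
    then show ?thesis using S by (intro R.add.finprod_singleton_swap) auto
  next
    case False
    then have "c y = \<zero>\<^bsub>R\<^esub>" by (simp add: S_def)
    moreover have "finsum R (\<lambda>i. if i = y then c i else \<zero>\<^bsub>R\<^esub>) S = \<zero>\<^bsub>R\<^esub>"
      using False by (intro R.add.finprod_one_eqI) auto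
    ultimately show ?thesis by simp
  qed
  finally show "lin_ext R (free_mod R X) (free_basis R) c y = c y" .
qed

lemma lmod_hom_eq_lin_ext:
  assumes R: "ring R" and N: "lmodule R N" and \<phi>: "\<phi> \<in> lmod_hom R (free_mod R X) N"
    and c: "c \<in> carrier (free_mod R X)"
  shows "\<phi> c = lin_ext R N (\<lambda>x. \<phi> (free_basis R x)) c"
  using lmod_hom_lin_ext[where h = "free_basis R", OF free_mod_lmodule[OF R] free_basis_closed[OF R] N \<phi> c]
    lin_ext_free_basis_self[OF R c]
  by simp

lemma projective_mod_lift:
  fixes P :: "('r, 'p) module"
  assumes P: "projective_mod R P" and N: "lmodule R N" and T: "lmodule R T"
    and \<phi>: "\<phi> \<in> lmod_hom R N T" and \<beta>: "\<beta> \<in> lmod_hom R P T"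
    and im: "\<And>p. p \<in> carrier P \<Longrightarrow> \<beta> p \<in> \<phi> ` carrier N"
  shows "\<exists>\<gamma>\<in>lmod_hom R P N. \<forall>p\<in>carrier P. \<phi> (\<gamma> p) = \<beta> p"
proof -
  interpret N: lmodule R N by (rule N)
  note R = N.ring_axioms
  obtain X :: "'p set" and \<pi> \<sigma> where \<pi>: "\<pi> \<in> lmod_hom R (free_mod R X) P"
    and \<sigma>: "\<sigma> \<in> lmod_hom R P (free_mod R X)" and \<pi>\<sigma>: "\<forall>p\<in>carrier P. \<pi> (\<sigma> p) = p"
    using P unfolding projective_mod_def by blast
  have \<beta>\<pi>: "(\<lambda>c. \<beta> (\<pi> c)) \<in> lmod_hom R (free_mod R X) T"
    by (rule lmod_hom_comp[OF \<pi> \<beta>])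
  have preimages: "\<forall>x\<in>X. \<exists>y. y \<in> carrier N \<and> \<phi> y = \<beta> (\<pi> (free_basis R x))"
  proof
    fix x assume "x \<in> X"
    then have "\<beta> (\<pi> (free_basis R x)) \<in> \<phi> ` carrier N"
      by (intro im lmod_hom_closed[OF \<pi>] free_basis_closed[OF R])
    then show "\<exists>y. y \<in> carrier N \<and> \<phi> y = \<beta> (\<pi> (free_basis R x))" by auto
  qed
  obtain y where y_closed: "\<And>x. x \<in> X \<Longrightarrow> y x \<in> carrier N"
    and y_lift: "\<And>x. x \<in> X \<Longrightarrow> \<phi> (y x) = \<beta> (\<pi> (free_basis R x))"
    using bchoice[OF preimages] by auto
  show ?thesis
  proof (intro bexI ballI)
    show "(\<lambda>p. lin_ext R N y (\<sigma> p)) \<in> lmod_hom R P N"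
      using y_closed by (intro lmod_hom_comp[OF \<sigma>] lin_ext_lmod_hom[OF N])
    fix p assume p: "p \<in> carrier P"
    have \<sigma>p: "\<sigma> p \<in> carrier (free_mod R X)" by (rule lmod_hom_closed[OF \<sigma> p])
    have "\<phi> (lin_ext R N y (\<sigma> p)) = lin_ext R T (\<lambda>x. \<phi> (y x)) (\<sigma> p)"
      using y_closed by (intro lmod_hom_lin_ext[OF N _ T \<phi> \<sigma>p])
    also have "\<dots> = lin_ext R T (\<lambda>x. \<beta> (\<pi> (free_basis R x))) (\<sigma> p)"
      by (intro lin_ext_cong[OF T _ \<sigma>p])
        (simp_all add: y_closed y_lift lmod_hom_closed[OF \<beta>\<pi> free_basis_closed[OF R]])
    also have "\<dots> = \<beta> (\<pi> (\<sigma> p))"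
      using lmod_hom_eq_lin_ext[OF R T \<beta>\<pi> \<sigma>p] by simp
    finally show "\<phi> (lin_ext R N y (\<sigma> p)) = \<beta> p"
      using \<pi>\<sigma> p by simp
  qed
qed

definition free_counit :: "'r ring \<Rightarrow> ('r, 'a) module \<Rightarrow> ('a \<Rightarrow> 'r) \<Rightarrow> 'a" where
  "free_counit R N = lin_ext R N (\<lambda>x. x)"

lemma free_counit_lmod_hom: "lmodule R N \<Longrightarrow> free_counit R N \<in> lmod_hom R (free_mod R (carrier N)) N"
  unfolding free_counit_def by (rule lin_ext_lmod_hom)

lemma free_counit_free_basis: "lmodule R N \<Longrightarrow> y \<in> carrier N \<Longrightarrow> free_counit R N (free_basis R y) = y"
  unfolding free_counit_def by (rule lin_ext_free_basis)

lemma free_counit_zero: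
  assumes "lmodule R N"
  shows "free_counit R N (\<lambda>x. \<zero>\<^bsub>R\<^esub>) = \<zero>\<^bsub>N\<^esub>"
proof -
  interpret N: lmodule R N by fact
  show ?thesis
    using lmod_hom_zero[OF free_mod_lmodule[OF N.ring_axioms] assms free_counit_lmod_hom[OF assms]]
    by (simp add: free_mod_simps)
qed


section \<open>Complexes\<close>

lemma complex_lmodule: "is_complex R C d \<Longrightarrow> lmodule R (C n)"
  by (simp add: is_complex_def left_module_iff_lmodule)

lemma complex_d_hom: "is_complex R C d \<Longrightarrow> d n \<in> lmod_hom R (C n) (C (n - 1))"
  by (simp add: is_complex_def)

lemma complex_d_hom_succ: "is_complex R C d \<Longrightarrow> d (n + 1) \<in> lmod_hom R (C (n + 1)) (C n)"
  using complex_d_hom[of R C d "n + 1"] by simp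

lemma complex_d_d:
  assumes "is_complex R C d" "x \<in> carrier (C (n + 1))"
  shows "d n (d (n + 1) x) = \<zero>\<^bsub>C (n - 1)\<^esub>"
proof -
  have "n + 1 - 2 = n - 1" by simp
  then show ?thesis
    using assms unfolding is_complex_def by (metis add_diff_cancel_right')
qed

lemma exact_complex_is_complex: "exact_complex R C d \<Longrightarrow> is_complex R C d"
  by (simp add: exact_complex_def)

lemma chain_map_hom: "chain_map R C dC D dD f \<Longrightarrow> f n \<in> lmod_hom R (C n) (D n)"
  by (simp add: chain_map_def)

lemma chain_map_commute:
  "chain_map R C dC D dD f \<Longrightarrow> x \<in> carrier (C n) \<Longrightarrow> f (n - 1) (dC n x) = dD n (f n x)"
  by (simp add: chain_map_def)

lemma lmod_hom_cycles_iff: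
  "g \<in> lmod_hom R P (cycles C d n) \<longleftrightarrow>
     g \<in> lmod_hom R P (C n) \<and> (\<forall>p\<in>carrier P. d n (g p) = \<zero>\<^bsub>C (n - 1)\<^esub>)"
  unfolding lmod_hom_def cycles_def by auto

lemma projective_lift_to_free_boundaries:
  fixes P :: "('r, 'p) module"
  assumes N: "exact_complex R N dN" and P: "projective_mod R P"
    and \<beta>: "\<beta> \<in> lmod_hom R P (cycles N dN n)"
  shows "\<exists>\<gamma>\<in>lmod_hom R P (free_mod R (carrier (N (n + 1)))).
           \<forall>p\<in>carrier P. dN (n + 1) (free_counit R (N (n + 1)) (\<gamma> p)) = \<beta> p"
proof -
  note cN = exact_complex_is_complex[OF N]
  note N' = complex_lmodule[OF cN]
  have \<phi>: "(\<lambda>c. dN (n + 1) (free_counit R (N (n + 1)) c)) \<in> lmod_hom R (free_mod R (carrier (N (n + 1)))) (N n)"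
    by (rule lmod_hom_comp[OF free_counit_lmod_hom[OF N'] complex_d_hom_succ[OF cN]])
  have im: "\<beta> p \<in> (\<lambda>c. dN (n + 1) (free_counit R (N (n + 1)) c)) ` carrier (free_mod R (carrier (N (n + 1))))"
    if p: "p \<in> carrier P" for p
  proof -
    obtain y where y: "y \<in> carrier (N (n + 1))" "\<beta> p = dN (n + 1) y"
      using lmod_hom_closed[OF \<beta> p] N by (auto simp: exact_complex_def)
    then show ?thesis
      using free_counit_free_basis[OF N' y(1)] free_basis_closed[OF lmodule.axioms(1)[OF N'] y(1)]
      by (metis image_eqI)
  qed
  show ?thesis
    using \<beta> unfolding lmod_hom_cycles_iff
    by (intro projective_mod_lift[OF P free_mod_lmodule N' \<phi> _ im] lmodule.axioms(1)[OF N']) auto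
qed

section \<open>Free complexes\<close>

lemma free_cplx_lmodule: "ring R \<Longrightarrow> lmodule R (free_cplx R X n)"
  unfolding free_cplx_def by (intro prod_mod_lmodule free_mod_lmodule)

lemma free_cplx_is_complex:
  assumes "ring R"
  shows "is_complex R (free_cplx R X) (free_cplx_d R)"
  unfolding is_complex_def
proof (intro allI conjI ballI)
  interpret R: ring R by fact
  fix n
  show "left_module R (free_cplx R X n)"
    using free_cplx_lmodule[OF assms] by (simp add: left_module_iff_lmodule)
  show "free_cplx_d R n \<in> lmod_hom R (free_cplx R X n) (free_cplx R X (n - 1))"
    by (auto simp: lmod_hom_def free_cplx_def free_cplx_d_def prod_mod_simps free_mod_simps)
  fix u
  show "free_cplx_d R (n - 1) (free_cplx_d R n u) = \<zero>\<^bsub>free_cplx R X (n - 2)\<^esub>"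
    by (simp add: free_cplx_d_def free_cplx_def prod_mod_simps free_mod_simps)
qed

definition free_pushforward :: "'r ring \<Rightarrow> ('b \<Rightarrow> 'q) \<Rightarrow> ('b \<Rightarrow> 'r) \<Rightarrow> 'q \<Rightarrow> 'r" where
  "free_pushforward R e c = (\<lambda>q. if q \<in> range e then c (the_inv e q) else \<zero>\<^bsub>R\<^esub>)"

lemma free_pullback_pushforward: "inj e \<Longrightarrow> free_pushforward R e c \<circ> e = c"
  by (auto simp: free_pushforward_def the_inv_f_f)

context
  fixes R :: "'r ring" and e :: "'b \<Rightarrow> 'q"
  assumes R: "ring R" and e: "inj e"
begin

interpretation R: ring R by (rule R)

lemma free_pullback_lmod_hom: "(\<lambda>c. c \<circ> e) \<in> lmod_hom R (free_mod R (e ` Y)) (free_mod R Y)"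
proof -
  have "c \<circ> e \<in> carrier (free_mod R Y)" if c: "c \<in> carrier (free_mod R (e ` Y))" for c
  proof -
    have "{y. (c \<circ> e) y \<noteq> \<zero>\<^bsub>R\<^esub>} = e -` {q. c q \<noteq> \<zero>\<^bsub>R\<^esub>}" by auto
    moreover have "finite (e -` {q. c q \<noteq> \<zero>\<^bsub>R\<^esub>})"
      using c e by (intro finite_vimageI) (auto simp: free_mod_simps)
    moreover have "e -` {q. c q \<noteq> \<zero>\<^bsub>R\<^esub>} \<subseteq> Y"
    proof
      fix y assume "y \<in> e -` {q. c q \<noteq> \<zero>\<^bsub>R\<^esub>}"
      then have "e y \<in> e ` Y" using c by (auto simp: free_mod_simps)
      then show "y \<in> Y" using inj_image_mem_iff[OF e] by simp
    qed
    ultimately show ?thesis using c by (auto simp: free_mod_simps)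
  qed
  then show ?thesis by (auto simp: lmod_hom_def free_mod_simps)
qed

lemma free_pushforward_lmod_hom: "free_pushforward R e \<in> lmod_hom R (free_mod R Y) (free_mod R (e ` Y))"
proof -
  have "free_pushforward R e c \<in> carrier (free_mod R (e ` Y))" if c: "c \<in> carrier (free_mod R Y)" for c
  proof -
    have supp: "{q. free_pushforward R e c q \<noteq> \<zero>\<^bsub>R\<^esub>} \<subseteq> e ` {y. c y \<noteq> \<zero>\<^bsub>R\<^esub>}"
      using e by (auto simp: free_pushforward_def the_inv_f_f)
    have "finite {q. free_pushforward R e c q \<noteq> \<zero>\<^bsub>R\<^esub>}"
      using c by (intro finite_subset[OF supp]) (auto simp: free_mod_simps)
    moreover have "e ` {y. c y \<noteq> \<zero>\<^bsub>R\<^esub>} \<subseteq> e ` Y"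
      using c by (auto simp: free_mod_simps)
    moreover have "free_pushforward R e c q \<in> carrier R" for q
      using c by (auto simp: free_pushforward_def free_mod_simps)
    ultimately show ?thesis using supp by (simp add: free_mod_simps)
  qed
  then show ?thesis by (auto simp: lmod_hom_def free_mod_simps free_pushforward_def)
qed

lemma free_cplx_pullback_chain_map:
  "chain_map R (free_cplx R (\<lambda>n. e ` Y n)) (free_cplx_d R) (free_cplx R Y) (free_cplx_d R)
     (\<lambda>n u. (fst u \<circ> e, snd u \<circ> e))"
  unfolding chain_map_def free_cplx_def
  by (intro allI conjI ballI lmod_hom_prod_map free_pullback_lmod_hom)
    (simp add: free_cplx_d_def comp_def)

lemma free_cplx_pushforward_chain_map:
  "chain_map R (free_cplx R Y) (free_cplx_d R) (free_cplx R (\<lambda>n. e ` Y n)) (free_cplx_d R)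
     (\<lambda>n u. (free_pushforward R e (fst u), free_pushforward R e (snd u)))"
  unfolding chain_map_def free_cplx_def
  by (intro allI conjI ballI lmod_hom_prod_map free_pushforward_lmod_hom)
    (simp add: free_cplx_d_def free_pushforward_def)

end

(* projective_cplx asks for generating sets inside the element type of the complex itself, so the
   Y n are transported along an injection 'b -> ('b => 'r) x ('b => 'r); such an injection exists
   unless 'r is a singleton type, and then all modules in sight are zero. *)
lemma free_cplx_projective:
  fixes R :: "'r ring" and Y :: "int \<Rightarrow> 'b set"
  assumes R: "ring R"
  shows "projective_cplx R (free_cplx R Y) (free_cplx_d R)"
  unfolding projective_cplx_def
proof (intro conjI free_cplx_is_complex[OF R])
  show "\<exists>(X :: int \<Rightarrow> (('b \<Rightarrow> 'r) \<times> ('b \<Rightarrow> 'r)) set) \<pi> \<sigma>.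
     chain_map R (free_cplx R X) (free_cplx_d R) (free_cplx R Y) (free_cplx_d R) \<pi> \<and>
     chain_map R (free_cplx R Y) (free_cplx_d R) (free_cplx R X) (free_cplx_d R) \<sigma> \<and>
     (\<forall>n. \<forall>u\<in>carrier (free_cplx R Y n). \<pi> n (\<sigma> n u) = u)"
  proof (cases "\<exists>r r' :: 'r. r \<noteq> r'")
    case True
    then obtain r r' :: 'r where "r \<noteq> r'" by blast
    define e :: "'b \<Rightarrow> ('b \<Rightarrow> 'r) \<times> ('b \<Rightarrow> 'r)" where "e y = ((\<lambda>z. if z = y then r else r'), (\<lambda>z. r))" for y
    have e: "inj e"
    proof (rule injI)
      fix y y' assume "e y = e y'"
      then have "fst (e y) y = fst (e y') y" by simp
      then show "y = y'" using \<open>r \<noteq> r'\<close> by (auto simp: e_def split: if_splits)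
    qed
    show ?thesis
      using free_cplx_pullback_chain_map[OF R e] free_cplx_pushforward_chain_map[OF R e]
        free_pullback_pushforward[OF e]
      by (intro exI[of _ "\<lambda>n. e ` Y n"] exI conjI) auto
  next
    case False
    then have trivial: "u = v" for u v :: "('x \<Rightarrow> 'r) \<times> ('y \<Rightarrow> 'r)"
      by (simp add: prod_eq_iff fun_eq_iff)
    have zero_chain_map: "chain_map R (free_cplx R X) (free_cplx_d R) (free_cplx R X') (free_cplx_d R)
        (\<lambda>n u. \<zero>\<^bsub>free_cplx R X' n\<^esub>)" for X X'
      using lmod_hom_const_zero[OF free_cplx_lmodule[OF R]] unfolding chain_map_def
      by (blast intro: trivial)
    show ?thesis
      using zero_chain_map[of "\<lambda>n. {}" Y] zero_chain_map[of Y "\<lambda>n. {}"] by (blast intro: trivial)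
  qed
qed

lemma chain_map_into_free_cplx:
  assumes M: "is_complex R M dM"
    and a: "\<And>n. a n \<in> lmod_hom R (M n) (free_mod R (Y (n + 1)))"
  shows "chain_map R M dM (free_cplx R Y) (free_cplx_d R) (\<lambda>n x. (a (n - 1) (dM n x), a n x))"
  unfolding chain_map_def
proof (intro allI conjI ballI)
  fix n
  have a': "a (n - 1) \<in> lmod_hom R (M (n - 1)) (free_mod R (Y n))"
    using a[of "n - 1"] by simp
  show "(\<lambda>x. (a (n - 1) (dM n x), a n x)) \<in> lmod_hom R (M n) (free_cplx R Y n)"
    unfolding free_cplx_def by (intro lmod_hom_pair lmod_hom_comp[OF complex_d_hom[OF M] a'] a)
  fix x assume x: "x \<in> carrier (M n)"
  have "dM (n - 1) (dM n x) = \<zero>\<^bsub>M (n - 2)\<^esub>"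
    using M x by (simp add: is_complex_def)
  moreover have "a (n - 2) \<zero>\<^bsub>M (n - 2)\<^esub> = (\<lambda>y. \<zero>\<^bsub>R\<^esub>)"
    using lmod_hom_zero[OF complex_lmodule[OF M] free_mod_lmodule a]
      lmodule.axioms(1)[OF complex_lmodule[OF M]]
    by (simp add: free_mod_simps)
  ultimately show "(a (n - 1 - 1) (dM (n - 1) (dM n x)), a (n - 1) (dM n x)) =
      free_cplx_d R n (a (n - 1) (dM n x), a n x)"
    by (simp add: free_cplx_d_def)
qed

lemma chain_map_from_free_cplx:
  assumes N: "is_complex R N dN"
    and e: "\<And>n. e n \<in> lmod_hom R (free_mod R (Y n)) (N n)"
  shows "chain_map R (free_cplx R Y) (free_cplx_d R) N dN
           (\<lambda>n u. e n (fst u) \<oplus>\<^bsub>N n\<^esub> dN (n + 1) (e (n + 1) (snd u)))"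
  unfolding chain_map_def
proof (intro allI conjI ballI)
  fix n
  interpret N': lmodule R "N (n - 1)" by (rule complex_lmodule[OF N])
  show "(\<lambda>u. e n (fst u) \<oplus>\<^bsub>N n\<^esub> dN (n + 1) (e (n + 1) (snd u))) \<in> lmod_hom R (free_cplx R Y n) (N n)"
    unfolding free_cplx_def
    by (intro lmod_hom_copair complex_lmodule[OF N] e lmod_hom_comp[OF e complex_d_hom_succ[OF N]])
  fix u assume u: "u \<in> carrier (free_cplx R Y n)"
  then have u1: "e n (fst u) \<in> carrier (N n)" and u2: "e (n + 1) (snd u) \<in> carrier (N (n + 1))"
    by (auto simp: free_cplx_def prod_mod_simps intro: lmod_hom_closed[OF e])
  have "e (n - 1) (\<lambda>y. \<zero>\<^bsub>R\<^esub>) = \<zero>\<^bsub>N (n - 1)\<^esub>"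
    using lmod_hom_zero[OF free_mod_lmodule[OF N'.ring_axioms] complex_lmodule[OF N] e]
    by (simp add: free_mod_simps)
  then have "e (n - 1) (fst (free_cplx_d R n u)) \<oplus>\<^bsub>N (n - 1)\<^esub>
        dN (n - 1 + 1) (e (n - 1 + 1) (snd (free_cplx_d R n u))) = dN n (e n (fst u))"
    using lmod_hom_closed[OF complex_d_hom[OF N] u1] by (simp add: free_cplx_d_def)
  also have "\<dots> = dN n (e n (fst u) \<oplus>\<^bsub>N n\<^esub> dN (n + 1) (e (n + 1) (snd u)))"
    using u1 u2 lmod_hom_closed[OF complex_d_hom[OF N] u1]
    by (simp add: lmod_hom_add[OF complex_d_hom[OF N]] lmod_hom_closed[OF complex_d_hom_succ[OF N]]
        complex_d_d[OF N])
  finally show "e (n - 1) (fst (free_cplx_d R n u)) \<oplus>\<^bsub>N (n - 1)\<^esub>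
        dN (n - 1 + 1) (e (n - 1 + 1) (snd (free_cplx_d R n u))) =
      dN n (e n (fst u) \<oplus>\<^bsub>N n\<^esub> dN (n + 1) (e (n + 1) (snd u)))" .
qed

section \<open>Null-homotopies through free modules\<close>

lemma int_dependent_choice:
  fixes b :: int
  assumes base: "\<And>n. n \<le> b \<Longrightarrow> S n z z" and start: "I (b + 1) z"
    and step: "\<And>n x. I n x \<Longrightarrow> \<exists>y. S n x y \<and> I (n + 1) y"
  shows "\<exists>a. \<forall>n. S n (a (n - 1)) (a n)"
proof -
  obtain g where g0: "g 0 = z" and g: "\<And>k. S (b + int k + 1) (g k) (g (Suc k))"
  proof -
    have "\<exists>g. \<forall>k. (I (b + int k + 1) (g k) \<and> (k = 0 \<longrightarrow> g k = z)) \<and> S (b + int k + 1) (g k) (g (Suc k))"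
    proof (rule dependent_nat_choice)
      fix x k assume "I (b + int k + 1) x \<and> (k = 0 \<longrightarrow> x = z)"
      then obtain y where "S (b + int k + 1) x y" "I (b + int k + 1 + 1) y"
        using step by blast
      moreover have "b + int (Suc k) + 1 = b + int k + 1 + 1" by simp
      ultimately show "\<exists>y. (I (b + int (Suc k) + 1) y \<and> (Suc k = 0 \<longrightarrow> y = z)) \<and> S (b + int k + 1) x y"
        by auto
    qed (use start in auto)
    then show ?thesis using that by blast
  qed
  define a where "a n = (if n \<le> b then z else g (nat (n - b)))" for n
  have "S n (a (n - 1)) (a n)" for n
  proof (cases "n \<le> b")
    case True
    then show ?thesis using base by (simp add: a_def)
  next
    case False
    define k where "k = nat (n - b - 1)"
    have n: "n = b + int k + 1"
      using False by (simp add: k_def)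
    have "a n = g (Suc k)" "a (n - 1) = g k"
      using g0 by (auto simp: a_def n nat_add_distrib)
    then show ?thesis using g[of k] n by simp
  qed
  then show ?thesis by blast
qed

context
  fixes R :: "'r ring"
    and M :: "int \<Rightarrow> ('r, 'a) module" and dM :: "int \<Rightarrow> 'a \<Rightarrow> 'a"
    and N :: "int \<Rightarrow> ('r, 'b) module" and dN :: "int \<Rightarrow> 'b \<Rightarrow> 'b"
    and f :: "int \<Rightarrow> 'a \<Rightarrow> 'b"
  assumes M: "is_complex R M dM" and N_exact: "exact_complex R N dN"
    and f: "chain_map R M dM N dN f"
    and subprojective: "\<forall>n. \<forall>g\<in>lmod_hom R (M n) (cycles N dN n).
               \<exists>P :: ('r, 'p) module. projective_mod R P \<and>
                 (\<exists>\<alpha>\<in>lmod_hom R (M n) P. \<exists>\<beta>\<in>lmod_hom R P (cycles N dN n).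
                    \<forall>x\<in>carrier (M n). \<beta> (\<alpha> x) = g x)"
begin

lemma homotopy_component_lmod_hom:
  assumes "a' \<in> lmod_hom R (M (n - 1)) (free_mod R (carrier (N n)))"
  shows "(\<lambda>x. free_counit R (N n) (a' (dM n x))) \<in> lmod_hom R (M n) (N n)"
  by (intro lmod_hom_comp[OF lmod_hom_comp[OF complex_d_hom[OF M] assms]] free_counit_lmod_hom
      complex_lmodule[OF exact_complex_is_complex[OF N_exact]])

lemma homotopy_remainder_in_cycles:
  assumes a'_hom: "a' \<in> lmod_hom R (M (n - 1)) (free_mod R (carrier (N n)))"
    and a'_on_boundaries:
      "\<forall>x\<in>carrier (M n). f (n - 1) (dM n x) = dN n (free_counit R (N n) (a' (dM n x)))"
  shows "(\<lambda>x. f n x \<ominus>\<^bsub>N n\<^esub> free_counit R (N n) (a' (dM n x))) \<in> lmod_hom R (M n) (cycles N dN n)"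
  unfolding lmod_hom_cycles_iff
proof (intro conjI ballI)
  note N_complex = exact_complex_is_complex[OF N_exact]
  interpret Nn: lmodule R "N n" by (rule complex_lmodule[OF N_complex])
  interpret Nn': lmodule R "N (n - 1)" by (rule complex_lmodule[OF N_complex])
  note s = homotopy_component_lmod_hom[OF a'_hom]
  show "(\<lambda>x. f n x \<ominus>\<^bsub>N n\<^esub> free_counit R (N n) (a' (dM n x))) \<in> lmod_hom R (M n) (N n)"
    by (rule lmod_hom_diff[OF Nn.lmodule_axioms chain_map_hom[OF f] s])
  fix x assume x: "x \<in> carrier (M n)"
  have "dN n (f n x \<ominus>\<^bsub>N n\<^esub> free_counit R (N n) (a' (dM n x))) =
      dN n (f n x) \<ominus>\<^bsub>N (n - 1)\<^esub> dN n (free_counit R (N n) (a' (dM n x)))"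
    by (rule lmod_hom_minus[OF Nn.lmodule_axioms Nn'.lmodule_axioms complex_d_hom[OF N_complex]
          lmod_hom_closed[OF chain_map_hom[OF f] x] lmod_hom_closed[OF s x]])
  also have "\<dots> = \<zero>\<^bsub>N (n - 1)\<^esub>"
    using a'_on_boundaries x chain_map_commute[OF f x]
      lmod_hom_closed[OF complex_d_hom[OF N_complex] lmod_hom_closed[OF chain_map_hom[OF f] x]]
    by (simp add: Nn'.minus_eq Nn'.r_neg)
  finally show "dN n (f n x \<ominus>\<^bsub>N n\<^esub> free_counit R (N n) (a' (dM n x))) = \<zero>\<^bsub>N (n - 1)\<^esub>" .
qed

lemma null_homotopy_step:
  assumes a'_hom: "a' \<in> lmod_hom R (M (n - 1)) (free_mod R (carrier (N n)))"
    and a'_on_boundaries: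
      "\<forall>x\<in>carrier (M n). f (n - 1) (dM n x) = dN n (free_counit R (N n) (a' (dM n x)))"
  shows "\<exists>a\<in>lmod_hom R (M n) (free_mod R (carrier (N (n + 1)))). \<forall>x\<in>carrier (M n).
           f n x = free_counit R (N n) (a' (dM n x)) \<oplus>\<^bsub>N n\<^esub> dN (n + 1) (free_counit R (N (n + 1)) (a x))"
proof -
  interpret Nn: lmodule R "N n" by (rule complex_lmodule[OF exact_complex_is_complex[OF N_exact]])
  define s where "s x = free_counit R (N n) (a' (dM n x))" for x
  obtain P :: "('r, 'p) module" and \<alpha> \<beta> where P: "projective_mod R P"
    and \<alpha>: "\<alpha> \<in> lmod_hom R (M n) P" and \<beta>: "\<beta> \<in> lmod_hom R P (cycles N dN n)"
    and \<beta>\<alpha>: "\<forall>x\<in>carrier (M n). \<beta> (\<alpha> x) = f n x \<ominus>\<^bsub>N n\<^esub> s x"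
    using subprojective[rule_format, OF homotopy_remainder_in_cycles[OF a'_hom a'_on_boundaries]]
    unfolding s_def by auto
  obtain \<gamma> where \<gamma>: "\<gamma> \<in> lmod_hom R P (free_mod R (carrier (N (n + 1))))"
    and d\<gamma>: "\<forall>p\<in>carrier P. dN (n + 1) (free_counit R (N (n + 1)) (\<gamma> p)) = \<beta> p"
    using projective_lift_to_free_boundaries[OF N_exact P \<beta>] by blast
  show ?thesis
  proof (intro bexI ballI)
    show "(\<lambda>x. \<gamma> (\<alpha> x)) \<in> lmod_hom R (M n) (free_mod R (carrier (N (n + 1))))"
      by (rule lmod_hom_comp[OF \<alpha> \<gamma>])
    fix x assume x: "x \<in> carrier (M n)"
    have "dN (n + 1) (free_counit R (N (n + 1)) (\<gamma> (\<alpha> x))) = f n x \<ominus>\<^bsub>N n\<^esub> s x"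
      using d\<gamma> \<beta>\<alpha> lmod_hom_closed[OF \<alpha> x] x by simp
    then have "s x \<oplus>\<^bsub>N n\<^esub> dN (n + 1) (free_counit R (N (n + 1)) (\<gamma> (\<alpha> x))) = f n x"
      using lmod_hom_closed[OF chain_map_hom[OF f] x]
        lmod_hom_closed[OF homotopy_component_lmod_hom[OF a'_hom] x]
      by (simp add: s_def Nn.minus_eq Nn.a_comm[of "f n x"] Nn.a_assoc[symmetric] Nn.r_neg)
    then show "f n x = free_counit R (N n) (a' (dM n x)) \<oplus>\<^bsub>N n\<^esub>
        dN (n + 1) (free_counit R (N (n + 1)) (\<gamma> (\<alpha> x)))"
      by (simp add: s_def)
  qed
qed

lemma null_homotopy_step_on_boundaries:
  assumes a'_hom: "a' \<in> lmod_hom R (M (n - 1)) (free_mod R (carrier (N n)))"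
    and a_hom: "a \<in> lmod_hom R (M n) (free_mod R (carrier (N (n + 1))))"
    and a: "\<forall>x\<in>carrier (M n).
              f n x = free_counit R (N n) (a' (dM n x)) \<oplus>\<^bsub>N n\<^esub> dN (n + 1) (free_counit R (N (n + 1)) (a x))"
    and x: "x \<in> carrier (M (n + 1))"
  shows "f n (dM (n + 1) x) = dN (n + 1) (free_counit R (N (n + 1)) (a (dM (n + 1) x)))"
proof -
  note N_complex = exact_complex_is_complex[OF N_exact]
  interpret Nn: lmodule R "N n" by (rule complex_lmodule[OF N_complex])
  have y: "dM (n + 1) x \<in> carrier (M n)" by (rule lmod_hom_closed[OF complex_d_hom_succ[OF M] x])
  have "a' (dM n (dM (n + 1) x)) = (\<lambda>y. \<zero>\<^bsub>R\<^esub>)"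
    using lmod_hom_zero[OF complex_lmodule[OF M] free_mod_lmodule[OF Nn.ring_axioms] a'_hom]
    by (simp add: complex_d_d[OF M x] free_mod_simps)
  moreover have "dN (n + 1) (free_counit R (N (n + 1)) (a (dM (n + 1) x))) \<in> carrier (N n)"
    using y by (intro lmod_hom_closed[OF complex_d_hom_succ[OF N_complex]] lmod_hom_closed[OF a_hom]
        lmod_hom_closed[OF free_counit_lmod_hom[OF complex_lmodule[OF N_complex]]])
  ultimately show ?thesis
    using a y free_counit_zero[OF Nn.lmodule_axioms] by simp
qed

lemma null_homotopy_through_free_modules:
  assumes "bounded_below M"
  shows "\<exists>a. \<forall>n. a n \<in> lmod_hom R (M n) (free_mod R (carrier (N (n + 1)))) \<and>
           (\<forall>x\<in>carrier (M n). f n x = free_counit R (N n) (a (n - 1) (dM n x)) \<oplus>\<^bsub>N n\<^esub>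
              dN (n + 1) (free_counit R (N (n + 1)) (a n x)))"
    (is "\<exists>a. \<forall>n. ?step n (a (n - 1)) (a n)")
proof -
  note N_complex = exact_complex_is_complex[OF N_exact]
  obtain b where b: "\<And>n. n \<le> b \<Longrightarrow> carrier (M n) = {\<zero>\<^bsub>M n\<^esub>}"
    using assms unfolding bounded_below_def by blast
  have R: "ring R" using complex_lmodule[OF M] by (rule lmodule.axioms(1))
  define z :: "'a \<Rightarrow> 'b \<Rightarrow> 'r" where "z = (\<lambda>x y. \<zero>\<^bsub>R\<^esub>)"
  have z_hom: "z \<in> lmod_hom R (M n) (free_mod R X)" for n X
    using lmod_hom_const_zero[OF free_mod_lmodule[OF R]] by (simp add: z_def free_mod_simps)
  have counit_z: "free_counit R (N n) (z x) = \<zero>\<^bsub>N n\<^esub>" for n x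
    using free_counit_zero[OF complex_lmodule[OF N_complex]] by (simp add: z_def)
  have f_zero: "f n \<zero>\<^bsub>M n\<^esub> = \<zero>\<^bsub>N n\<^esub>" and dN_zero: "dN n \<zero>\<^bsub>N n\<^esub> = \<zero>\<^bsub>N (n - 1)\<^esub>" for n
    by (rule lmod_hom_zero[OF complex_lmodule[OF M] complex_lmodule[OF N_complex] chain_map_hom[OF f]]
        lmod_hom_zero[OF complex_lmodule[OF N_complex] complex_lmodule[OF N_complex] complex_d_hom[OF N_complex]])+
  define on_boundaries where "on_boundaries n a' \<longleftrightarrow>
    a' \<in> lmod_hom R (M (n - 1)) (free_mod R (carrier (N n))) \<and>
    (\<forall>x\<in>carrier (M n). f (n - 1) (dM n x) = dN n (free_counit R (N n) (a' (dM n x))))" for n a'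
  show ?thesis
  proof (rule int_dependent_choice[where I = on_boundaries and z = z and b = b])
    fix n assume n: "n \<le> b"
    interpret Nn: lmodule R "N n" by (rule complex_lmodule[OF N_complex])
    show "?step n z z"
      using b[OF n] z_hom by (simp add: counit_z f_zero dN_zero)
  next
    show "on_boundaries (b + 1) z"
      using b[of b] lmod_hom_closed[OF complex_d_hom_succ[OF M]]
      by (fastforce simp: on_boundaries_def z_hom counit_z f_zero dN_zero)
  next
    fix n a' assume "on_boundaries n a'"
    then have a'_hom: "a' \<in> lmod_hom R (M (n - 1)) (free_mod R (carrier (N n)))"
      and a'_on_boundaries:
        "\<forall>x\<in>carrier (M n). f (n - 1) (dM n x) = dN n (free_counit R (N n) (a' (dM n x)))"
      by (simp_all add: on_boundaries_def)
    obtain a where a_hom: "a \<in> lmod_hom R (M n) (free_mod R (carrier (N (n + 1))))"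
      and a: "\<forall>x\<in>carrier (M n). f n x = free_counit R (N n) (a' (dM n x)) \<oplus>\<^bsub>N n\<^esub>
           dN (n + 1) (free_counit R (N (n + 1)) (a x))"
      using null_homotopy_step[OF a'_hom a'_on_boundaries] by blast
    then show "\<exists>a. ?step n a' a \<and> on_boundaries (n + 1) a"
      using null_homotopy_step_on_boundaries[OF a'_hom a_hom a] by (auto simp: on_boundaries_def)
  qed
qed

end

theorem theorem2p6:
  fixes R :: "'r ring"
    and M :: "int \<Rightarrow> ('r, 'a) module" and dM :: "int \<Rightarrow> 'a \<Rightarrow> 'a"
    and N :: "int \<Rightarrow> ('r, 'b) module" and dN :: "int \<Rightarrow> 'b \<Rightarrow> 'b"
  assumes "ring R"
    and "is_complex R M dM" and "bounded_below M"
    and "exact_complex R N dN"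
    and hyp: "\<forall>n. \<forall>g\<in>lmod_hom R (M n) (cycles N dN n).
               \<exists>P :: ('r, 'p) module. projective_mod R P \<and>
                 (\<exists>\<alpha>\<in>lmod_hom R (M n) P. \<exists>\<beta>\<in>lmod_hom R P (cycles N dN n).
                    \<forall>x\<in>carrier (M n). \<beta> (\<alpha> x) = g x)"
  shows "\<forall>f. chain_map R M dM N dN f \<longrightarrow>
           (\<exists>(Q :: int \<Rightarrow> ('r, ('b \<Rightarrow> 'r) \<times> ('b \<Rightarrow> 'r)) module) dQ \<alpha> \<beta>.
              projective_cplx R Q dQ \<and>
              chain_map R M dM Q dQ \<alpha> \<and> chain_map R Q dQ N dN \<beta> \<and>
              (\<forall>n. \<forall>x\<in>carrier (M n). \<beta> n (\<alpha> n x) = f n x))"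
proof (intro allI impI)
  fix f assume f: "chain_map R M dM N dN f"
  note N_complex = exact_complex_is_complex[OF assms(4)]
  obtain a where a_hom: "\<And>n. a n \<in> lmod_hom R (M n) (free_mod R (carrier (N (n + 1))))"
    and homotopy: "\<And>n x. x \<in> carrier (M n) \<Longrightarrow> f n x = free_counit R (N n) (a (n - 1) (dM n x)) \<oplus>\<^bsub>N n\<^esub>
        dN (n + 1) (free_counit R (N (n + 1)) (a n x))"
    using null_homotopy_through_free_modules[OF assms(2,4) f hyp assms(3)] by blast
  let ?Y = "\<lambda>n. carrier (N n)"
  have "projective_cplx R (free_cplx R ?Y) (free_cplx_d R)"
    by (rule free_cplx_projective[OF assms(1)])
  moreover have "chain_map R M dM (free_cplx R ?Y) (free_cplx_d R) (\<lambda>n x. (a (n - 1) (dM n x), a n x))"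
    by (rule chain_map_into_free_cplx[OF assms(2) a_hom])
  moreover have "chain_map R (free_cplx R ?Y) (free_cplx_d R) N dN
      (\<lambda>n u. free_counit R (N n) (fst u) \<oplus>\<^bsub>N n\<^esub> dN (n + 1) (free_counit R (N (n + 1)) (snd u)))"
    by (rule chain_map_from_free_cplx[OF N_complex free_counit_lmod_hom[OF complex_lmodule[OF N_complex]]])
  ultimately show "\<exists>(Q :: int \<Rightarrow> ('r, ('b \<Rightarrow> 'r) \<times> ('b \<Rightarrow> 'r)) module) dQ \<alpha> \<beta>.
      projective_cplx R Q dQ \<and> chain_map R M dM Q dQ \<alpha> \<and> chain_map R Q dQ N dN \<beta> \<and>
      (\<forall>n. \<forall>x\<in>carrier (M n). \<beta> n (\<alpha> n x) = f n x)"
    by (intro exI conjI allI ballI) (assumption+, simp add: homotopy)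
qed

end
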